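(* Let $L$ be a distributive lattice with minimum $0_L$ and maximum $1_L$, and let $K_L=\{x^*\in L^*:\max\{|x^*(0_L)|,|x^*(1_L)|\}=1\}$ with the product (pointwise) topology. If $U\subseteq K_L$ is open, $x_0^*\in U$ and $\varepsilon>0$, then there exists $g\in\mathrm{FVL}\langle L\rangle$ with $g\ge0$ such that $g(x_0^* )>0$, $g\le\varepsilon$ on $U$, and $g=0$ on $K_L\setminus U$.
   Context: $L^*$ is the set of all lattice homomorphisms $x^*:L\to[-1,1]$; for $x\in L$, $\delta_x:L^*\to\mathbb R$ is $\delta_x(x^* )=x^*(x)$. $\mathrm{FVL}\langle L\rangle$ is the vector sublattice of $\mathbb R^{L^*}$ (pointwise operations) generated by $\{\delta_x:x\in L\}$. $\mathrm{FBL}\langle L\rangle$ is its norm closure with respect to the norm $\|f\|=\sup\{\sum_{i=1}^m|f(x_i^* )|: m\in\mathbb N,\ x_i^*\in L^*,\ \sup_{x\in L}\sum_{i=1}^m|x_i^*(x)|\le1\}$ within positively homogeneous functions on $L^*$. *)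

theory Defs
  imports "HOL-Analysis.Analysis"
begin

definition lat_dual :: "('a::lattice \<Rightarrow> real) set" where
  "lat_dual = {xs. (\<forall>x. xs x \<in> {-1..1}) \<and>
                   (\<forall>x y. xs (sup x y) = max (xs x) (xs y)) \<and>
                   (\<forall>x y. xs (inf x y) = min (xs x) (xs y))}"

definition delta :: "'a \<Rightarrow> ('a \<Rightarrow> real) \<Rightarrow> real" where
  "delta x = (\<lambda>xs. xs x)"

inductive_set FVL :: "(('a::lattice \<Rightarrow> real) \<Rightarrow> real) set" where
  gen: "delta x \<in> FVL"
| add: "f \<in> FVL \<Longrightarrow> g \<in> FVL \<Longrightarrow> (\<lambda>xs. f xs + g xs) \<in> FVL"
| smult: "f \<in> FVL \<Longrightarrow> (\<lambda>xs. c * f xs) \<in> FVL"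
| max: "f \<in> FVL \<Longrightarrow> g \<in> FVL \<Longrightarrow> (\<lambda>xs. max (f xs) (g xs)) \<in> FVL"
| min: "f \<in> FVL \<Longrightarrow> g \<in> FVL \<Longrightarrow> (\<lambda>xs. min (f xs) (g xs)) \<in> FVL"

definition K_L :: "('a::bounded_lattice \<Rightarrow> real) set" where
  "K_L = {xs \<in> lat_dual. max \<bar>xs bot\<bar> \<bar>xs top\<bar> = 1}"

end

theory Submission
  imports Defs
begin

text \<open>
  On \<open>K_L\<close> the function \<open>N x\<^sup>* = max \<bar>x\<^sup>*(0\<^sub>L)\<bar> \<bar>x\<^sup>*(1\<^sub>L)\<bar>\<close> is identically \<open>1\<close>, while \<open>N \<le> 1\<close> on all of
  \<open>L\<^sup>*\<close>. Hence the non-homogeneous bump \<open>\<delta> - \<Sigma>\<^sub>a\<^sub>\<in>\<^sub>A \<bar>x\<^sup>*(a) - x\<^sub>0\<^sup>*(a)\<bar>\<close> can be homogenised to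
  \<open>\<delta> N - \<Sigma>\<^sub>a\<^sub>\<in>\<^sub>A \<bar>\<delta>\<^sub>a - x\<^sub>0\<^sup>*(a) N\<bar>\<close>, an element of \<open>FVL\<langle>L\<rangle>\<close> that agrees with it on \<open>K_L\<close>. Choosing
  the finite set \<open>A\<close> and \<open>\<delta> \<le> \<epsilon>\<close> from a basic product neighbourhood of \<open>x\<^sub>0\<^sup>*\<close> inside \<open>U\<close>, its
  positive part has all the required properties.
\<close>

lemma FVL_delta: "(\<lambda>xs. xs x) \<in> FVL"
  using FVL.gen[of x] by (simp add: delta_def)

lemma FVL_zero: "(\<lambda>xs. 0) \<in> FVL"
  using FVL.smult[OF FVL.gen, of 0] by simp

lemma FVL_uminus: "f \<in> FVL \<Longrightarrow> (\<lambda>xs. - f xs) \<in> FVL"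
  using FVL.smult[of f "-1"] by simp

lemma FVL_diff: "f \<in> FVL \<Longrightarrow> g \<in> FVL \<Longrightarrow> (\<lambda>xs. f xs - g xs) \<in> FVL"
  using FVL.add[OF _ FVL_uminus, of f g] by simp

lemma FVL_abs:
  assumes "f \<in> FVL"
  shows "(\<lambda>xs. \<bar>f xs\<bar>) \<in> FVL"
proof -
  have "(\<lambda>xs. \<bar>f xs\<bar>) = (\<lambda>xs. max (f xs) (- f xs))"
    by (auto simp: abs_if)
  then show ?thesis using FVL.max[OF assms FVL_uminus[OF assms]] by simp
qed

lemma FVL_sum:
  "finite A \<Longrightarrow> (\<And>a. a \<in> A \<Longrightarrow> f a \<in> FVL) \<Longrightarrow> (\<lambda>xs. \<Sum>a\<in>A. f a xs) \<in> FVL"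
proof (induction A rule: finite_induct)
  case empty
  then show ?case using FVL_zero by simp
next
  case (insert x F)
  then show ?case using FVL.add[of "f x" "\<lambda>xs. \<Sum>a\<in>F. f a xs"] by simp
qed

lemma open_fun_contains_finite_box:
  fixes T :: "('a \<Rightarrow> 'b::metric_space) set"
  assumes "open T" "x \<in> T"
  obtains A \<delta> where "finite A" "\<delta> > 0" "\<And>y. (\<forall>a\<in>A. dist (y a) (x a) < \<delta>) \<Longrightarrow> y \<in> T"
proof -
  obtain X where X: "x \<in> (\<Pi>\<^sub>E i\<in>UNIV. X i)" "\<And>i. openin euclidean (X i)"
    "finite {i. X i \<noteq> UNIV}" "(\<Pi>\<^sub>E i\<in>UNIV. X i) \<subseteq> T"
    using product_topology_open_contains_basis[of "\<lambda>i. euclidean" UNIV T x] assms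
    unfolding open_fun_def by auto
  define A where "A = {i. X i \<noteq> UNIV}"
  have "finite A" using X(3) by (simp add: A_def)
  have "\<forall>a\<in>A. \<exists>r>0. ball (x a) r \<subseteq> X a"
    using X(1,2) by (metis PiE_iff UNIV_I open_contains_ball open_openin)
  then obtain r where r: "\<And>a. a \<in> A \<Longrightarrow> r a > 0 \<and> ball (x a) (r a) \<subseteq> X a"
    by metis
  define \<delta> where "\<delta> = Min (insert 1 (r ` A))"
  have "\<delta> > 0" unfolding \<delta>_def using \<open>finite A\<close> r by auto
  have \<delta>_le: "\<delta> \<le> r a" if "a \<in> A" for a unfolding \<delta>_def using \<open>finite A\<close> that by auto
  have "y \<in> T" if close: "\<forall>a\<in>A. dist (y a) (x a) < \<delta>" for y
  proof -
    have "y i \<in> X i" for i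
    proof (cases "i \<in> A")
      case True
      then have "y i \<in> ball (x i) (r i)"
        using close \<delta>_le[OF True] by (auto simp: dist_commute)
      then show ?thesis using r[OF True] by blast
    next
      case False
      then show ?thesis by (simp add: A_def)
    qed
    then show ?thesis using X(4) by auto
  qed
  then show thesis using that \<open>finite A\<close> \<open>\<delta> > 0\<close> by blast
qed

definition end_norm :: "('a::bounded_lattice \<Rightarrow> real) \<Rightarrow> real" where
  "end_norm xs = max \<bar>xs bot\<bar> \<bar>xs top\<bar>"

lemma end_norm_FVL: "end_norm \<in> FVL"
  unfolding end_norm_def[abs_def] by (intro FVL.max FVL_abs FVL_delta)

lemma end_norm_K_L: "xs \<in> K_L \<Longrightarrow> end_norm xs = 1"
  by (simp add: K_L_def end_norm_def)

lemma end_norm_le_one: "xs \<in> lat_dual \<Longrightarrow> end_norm xs \<le> 1"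
  unfolding lat_dual_def end_norm_def by (auto simp: abs_le_iff)

definition bump :: "'a set \<Rightarrow> real \<Rightarrow> ('a::bounded_lattice \<Rightarrow> real) \<Rightarrow> ('a \<Rightarrow> real) \<Rightarrow> real" where
  "bump A \<delta> x0 xs = max (\<delta> * end_norm xs - (\<Sum>a\<in>A. \<bar>xs a - x0 a * end_norm xs\<bar>)) 0"

lemma bump_FVL: "finite A \<Longrightarrow> bump A \<delta> x0 \<in> FVL"
  unfolding bump_def[abs_def]
  by (intro FVL.max FVL_diff FVL.smult FVL_sum FVL_abs FVL_delta end_norm_FVL FVL_zero)

lemma bump_nonneg: "bump A \<delta> x0 xs \<ge> 0"
  by (simp add: bump_def)

lemma bump_center: "x0 \<in> K_L \<Longrightarrow> \<delta> \<ge> 0 \<Longrightarrow> bump A \<delta> x0 x0 = \<delta>"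
  by (simp add: bump_def end_norm_K_L)

lemma bump_le:
  assumes "xs \<in> lat_dual" "\<delta> \<ge> 0"
  shows "bump A \<delta> x0 xs \<le> \<delta>"
proof -
  have "\<delta> * end_norm xs - (\<Sum>a\<in>A. \<bar>xs a - x0 a * end_norm xs\<bar>) \<le> \<delta> * end_norm xs"
    by (simp add: sum_nonneg)
  also have "\<dots> \<le> \<delta>"
    using end_norm_le_one[OF assms(1)] assms(2) by (simp add: mult_left_le)
  finally show ?thesis using assms(2) by (simp add: bump_def)
qed

lemma bump_vanishes:
  assumes "finite A" "xs \<in> K_L" "a \<in> A" "\<bar>xs a - x0 a\<bar> \<ge> \<delta>"
  shows "bump A \<delta> x0 xs = 0"
proof -
  have "\<delta> \<le> \<bar>xs a - x0 a * end_norm xs\<bar>"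
    using assms(2,4) by (simp add: end_norm_K_L)
  also have "\<dots> \<le> (\<Sum>a\<in>A. \<bar>xs a - x0 a * end_norm xs\<bar>)"
    by (rule member_le_sum) (use assms(1,3) in auto)
  finally show ?thesis using end_norm_K_L[OF assms(2)] by (simp add: bump_def)
qed

theorem mainTheorem6:
  fixes U :: "('a::{distrib_lattice, bounded_lattice} \<Rightarrow> real) set"
    and x0 :: "'a \<Rightarrow> real" and \<epsilon> :: real
  assumes "openin (top_of_set K_L) U"
    and "x0 \<in> U"
    and "\<epsilon> > 0"
  shows "\<exists>g \<in> FVL. (\<forall>xs \<in> lat_dual. g xs \<ge> 0) \<and> g x0 > 0 \<and>
           (\<forall>xs \<in> U. g xs \<le> \<epsilon>) \<and> (\<forall>xs \<in> K_L - U. g xs = 0)"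
proof -
  obtain T where T: "open T" "U = K_L \<inter> T" using assms(1) by (auto simp: openin_open)
  then have "x0 \<in> T" "x0 \<in> K_L" using assms(2) by auto
  then obtain A \<delta> where A: "finite A" and "\<delta> > 0"
    and box: "\<And>y. (\<forall>a\<in>A. dist (y a) (x0 a) < \<delta>) \<Longrightarrow> y \<in> T"
    using open_fun_contains_finite_box[OF T(1)] by metis
  define \<eta> where "\<eta> = min \<delta> \<epsilon>"
  have "\<eta> > 0" using \<open>\<delta> > 0\<close> assms(3) by (simp add: \<eta>_def)
  have "bump A \<eta> x0 xs = 0" if xs: "xs \<in> K_L - U" for xs
  proof -
    obtain a where "a \<in> A" "\<bar>xs a - x0 a\<bar> \<ge> \<delta>"
      using xs box T(2) by (force simp: dist_real_def)
    then show ?thesis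
      using bump_vanishes[OF A, of xs a] xs by (simp add: \<eta>_def)
  qed
  moreover have "bump A \<eta> x0 xs \<le> \<epsilon>" if "xs \<in> U" for xs
    using bump_le[of xs \<eta>] that T(2) \<open>\<eta> > 0\<close> by (force simp: K_L_def \<eta>_def)
  ultimately show ?thesis
    using bump_FVL[OF A] bump_nonneg bump_center[OF \<open>x0 \<in> K_L\<close>] \<open>\<eta> > 0\<close>
    by (intro bexI[of _ "bump A \<eta> x0"]) auto
qed

end
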